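(* Consider a single-core non-preemptive server of capacity $f>0$ and tasks $1,\dots,N$, all available at time $0$, task $a$ requiring $\alpha_a$ CPU cycles with deadline $\beta_a$. Let $\mathbf{s}$ be an optimal ordered set without any outages, of size $M$, and let $\mathbf{s}'$ be the ordered set, of size $P$, produced by the Optimal Job Scheduling algorithm; $\mathbf{s}'$ has no outages. Then $\mathbf{s}'$ is an optimal ordered set and $P=M$.
   Context: An ordered set is a sequence of distinct tasks executed back-to-back from time $0$; the task in position $l$ completes at $\frac1f\sum_{k=1}^{l}\alpha_{s(k)}$ and is in outage if this exceeds its deadline. An optimal ordered set is an ordered set with no outage of maximum cardinality. Optimal Job Scheduling algorithm: let $\mathbf{c}=[c(1),\dots,c(N)]$ be the ordering of $[1:N]$ by nondecreasing $\alpha$ (ties broken by nonincreasing $\beta$) and $\mathbf{b}=[b(1),\dots,b(N)]$ the ordering of $[1:N]$ by nondecreasing $\beta$ (ties broken by nondecreasing $\alpha$). Initialize $\mathbf{q}=[q(1),\dots,q(N)]=\mathbf 0$ (entry $0$ denotes an empty slot, with $\alpha_0=0$). For $i=1,\dots,N$: find $i^*$ with $b(i^* )=c(i)$ and set $q(i^* )\gets b(i^* )$; if for some $j\in[i^*:N]$ with $q(j)\neq0$ we have $\sum_{k=1}^{j}\alpha_{q(k)}/f>\beta_{q(j)}$, reset $q(i^* )\gets0$. The output $\mathbf{s}'$ is the sequence of nonzero entries of $\mathbf{q}$ in order, of length $P$. *)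

theory Defs
  imports Main "HOL.Real"
begin

text \<open>Tasks are numbered 1..N; an ordered set is a list of distinct tasks.
  Positions in lists are 0-indexed: the task at list position l completes at
  (sum of alpha over positions 0..l) / f.\<close>

definition ordered_set :: "nat \<Rightarrow> nat list \<Rightarrow> bool" where
  "ordered_set N s \<longleftrightarrow> distinct s \<and> set s \<subseteq> {1..N}"

definition completion_time :: "(nat \<Rightarrow> real) \<Rightarrow> real \<Rightarrow> nat list \<Rightarrow> nat \<Rightarrow> real" where
  "completion_time alpha f s l = sum_list (map alpha (take (Suc l) s)) / f"

definition no_outage :: "(nat \<Rightarrow> real) \<Rightarrow> (nat \<Rightarrow> real) \<Rightarrow> real \<Rightarrow> nat list \<Rightarrow> bool" where
  "no_outage alpha beta f s \<longleftrightarrow> (\<forall>l < length s. completion_time alpha f s l \<le> beta (s ! l))"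

definition optimal_ordered_set ::
  "nat \<Rightarrow> (nat \<Rightarrow> real) \<Rightarrow> (nat \<Rightarrow> real) \<Rightarrow> real \<Rightarrow> nat list \<Rightarrow> bool" where
  "optimal_ordered_set N alpha beta f s \<longleftrightarrow>
     ordered_set N s \<and> no_outage alpha beta f s \<and>
     (\<forall>t. ordered_set N t \<and> no_outage alpha beta f t \<longrightarrow> length t \<le> length s)"

text \<open>Slot weight: entry 0 is an empty slot with alpha_0 = 0.\<close>
definition slot_alpha :: "(nat \<Rightarrow> real) \<Rightarrow> nat \<Rightarrow> real" where
  "slot_alpha alpha x = (if x = 0 then 0 else alpha x)"

definition ojs_step ::
  "(nat \<Rightarrow> real) \<Rightarrow> (nat \<Rightarrow> real) \<Rightarrow> real \<Rightarrow> nat list \<Rightarrow> nat list \<Rightarrow> nat \<Rightarrow> nat list" where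
  "ojs_step alpha beta f b q ci =
     (let istar = (THE i. i < length b \<and> b ! i = ci);
          q' = q[istar := b ! istar]
      in if (\<exists>j. istar \<le> j \<and> j < length q' \<and> q' ! j \<noteq> 0 \<and>
                 sum_list (map (slot_alpha alpha) (take (Suc j) q')) / f > beta (q' ! j))
         then q'[istar := 0] else q')"

definition ojs ::
  "(nat \<Rightarrow> real) \<Rightarrow> (nat \<Rightarrow> real) \<Rightarrow> real \<Rightarrow> nat list \<Rightarrow> nat list \<Rightarrow> nat list" where
  "ojs alpha beta f c b =
     filter (\<lambda>x. x \<noteq> 0) (foldl (ojs_step alpha beta f b) (replicate (length b) 0) c)"

definition c_order :: "(nat \<Rightarrow> real) \<Rightarrow> (nat \<Rightarrow> real) \<Rightarrow> nat \<Rightarrow> nat \<Rightarrow> bool" where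
  "c_order alpha beta x y \<longleftrightarrow> alpha x < alpha y \<or> (alpha x = alpha y \<and> beta x \<ge> beta y)"

definition b_order :: "(nat \<Rightarrow> real) \<Rightarrow> (nat \<Rightarrow> real) \<Rightarrow> nat \<Rightarrow> nat \<Rightarrow> bool" where
  "b_order alpha beta x y \<longleftrightarrow> beta x < beta y \<or> (beta x = beta y \<and> alpha x \<le> alpha y)"

end

theory Submission imports Defs begin

text \<open>A set of tasks can be run without outage iff it is EDF-feasible: for every member j, the
  total work of the members whose deadline is at most \<beta> j fits into f \<beta> j; running
  the set in nondecreasing deadline order then meets every deadline. The algorithm keeps its
  selection in the deadline order b and accepts the next task c(i) exactly when the enlarged
  selection stays EDF-feasible. Since tasks are offered by nondecreasing \<alpha>, an exchange
  argument keeps, after every step, a maximum EDF-feasible set that agrees with the selection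
  on all tasks offered so far: if it omits an accepted task c, trading its not yet offered
  member e of least deadline for c preserves feasibility because \<alpha> c \<le> \<alpha> e.
  After the last step the selection itself is a maximum EDF-feasible set.\<close>

definition demand :: "(nat \<Rightarrow> real) \<Rightarrow> (nat \<Rightarrow> real) \<Rightarrow> nat set \<Rightarrow> real \<Rightarrow> real" where
  "demand al be S d = sum al {k\<in>S. be k \<le> d}"

definition edf_feasible :: "(nat \<Rightarrow> real) \<Rightarrow> (nat \<Rightarrow> real) \<Rightarrow> real \<Rightarrow> nat set \<Rightarrow> bool" where
  "edf_feasible al be f S \<longleftrightarrow> (\<forall>j\<in>S. demand al be S (be j) \<le> f * be j)"

lemma demand_le_if_edf_feasible:
  assumes "edf_feasible al be f S" "finite S" "m \<in> S" "be m \<le> d" "f \<ge> 0"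
  shows "demand al be S d \<le> f * d"
proof -
  let ?A = "{k\<in>S. be k \<le> d}"
  obtain x where x: "x \<in> ?A" "\<forall>y\<in>?A. be y \<le> be x"
    using ex_is_arg_min_if_finite[of ?A "\<lambda>x. - be x"] assms(2-4)
    by (auto simp: is_arg_min_def not_less)
  then have "?A = {k\<in>S. be k \<le> be x}"
    by auto
  then have "demand al be S d = demand al be S (be x)"
    by (simp add: demand_def)
  also have "\<dots> \<le> f * be x"
    using assms(1) x unfolding edf_feasible_def by auto
  also have "\<dots> \<le> f * d"
    using x assms(5) by (auto intro: mult_left_mono)
  finally show ?thesis .
qed

lemma edf_feasible_subset:
  assumes "edf_feasible al be f S" "finite S" "T \<subseteq> S" "\<forall>x\<in>S. al x \<ge> 0"
  shows "edf_feasible al be f T"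
  unfolding edf_feasible_def
proof
  fix j assume "j \<in> T"
  have "demand al be T (be j) \<le> demand al be S (be j)"
    unfolding demand_def by (rule sum_mono2) (use assms in auto)
  also have "\<dots> \<le> f * be j"
    using assms \<open>j \<in> T\<close> unfolding edf_feasible_def by auto
  finally show "demand al be T (be j) \<le> f * be j" .
qed

lemma edf_feasible_exchange:
  assumes T: "edf_feasible al be f T" "finite T"
    and S: "S \<subseteq> T" "edf_feasible al be f (insert c S)"
    and e: "e \<in> T" "\<forall>k\<in>T - S. be e \<le> be k"
    and c: "c \<notin> T" "0 \<le> al c" "al c \<le> al e" and "f \<ge> 0"
  shows "edf_feasible al be f (insert c (T - {e}))"
  unfolding edf_feasible_def
proof
  fix j assume j: "j \<in> insert c (T - {e})"
  show "demand al be (insert c (T - {e})) (be j) \<le> f * be j"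
  proof (cases "be j < be e")
    case True
    have "{k\<in>insert c (T - {e}). be k \<le> be j} = {k\<in>insert c S. be k \<le> be j}"
      using True S(1) e(2) by force
    moreover have "demand al be (insert c S) (be j) \<le> f * be j"
      using True j e(2) S(2) unfolding edf_feasible_def by force
    ultimately show ?thesis
      by (simp add: demand_def)
  next
    case False
    let ?A = "{k\<in>T. be k \<le> be j}"
    have "e \<in> ?A" "c \<notin> ?A" "finite ?A"
      using False e(1) c(1) T(2) by auto
    have "demand al be (insert c (T - {e})) (be j) \<le> sum al (insert c (?A - {e}))"
      unfolding demand_def by (rule sum_mono2) (use \<open>finite ?A\<close> c(2) in auto)
    also have "\<dots> = al c + (sum al ?A - al e)"
      using \<open>e \<in> ?A\<close> \<open>c \<notin> ?A\<close> \<open>finite ?A\<close> by (subst sum.insert) (auto simp: sum_diff1)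
    also have "\<dots> \<le> demand al be T (be j)"
      using c(3) by (simp add: demand_def)
    also have "\<dots> \<le> f * be j"
      using demand_le_if_edf_feasible[OF T e(1)] False \<open>f \<ge> 0\<close> by simp
    finally show ?thesis .
  qed
qed

definition slots_meet_deadlines :: "(nat \<Rightarrow> real) \<Rightarrow> (nat \<Rightarrow> real) \<Rightarrow> real \<Rightarrow> nat list \<Rightarrow> bool" where
  "slots_meet_deadlines al be f q \<longleftrightarrow>
     (\<forall>j<length q. q ! j \<noteq> 0 \<longrightarrow> sum_list (map (slot_alpha al) (take (Suc j) q)) / f \<le> be (q ! j))"

lemma sum_list_slot_alpha_take:
  assumes "distinct (filter (\<lambda>x. x \<noteq> 0) q)"
  shows "sum_list (map (slot_alpha al) (take n q)) = sum al (set (take n q) - {0})"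
proof -
  let ?p = "filter (\<lambda>x. x \<noteq> 0) (take n q)"
  have "distinct ?p"
    using assms by (metis append_take_drop_id distinct_append filter_append)
  have "sum_list (map (slot_alpha al) (take n q)) = sum_list (map (slot_alpha al) ?p)"
    by (induction q arbitrary: n) (auto simp: slot_alpha_def take_Cons split: nat.split)
  also have "\<dots> = sum (slot_alpha al) (set ?p)"
    using \<open>distinct ?p\<close> by (rule sum_list_distinct_conv_sum_set)
  also have "\<dots> = sum al (set (take n q) - {0})"
    by (rule sum.cong) (auto simp: slot_alpha_def)
  finally show ?thesis .
qed

lemma slots_meet_deadlines_imp_edf_feasible:
  assumes dist: "distinct (filter (\<lambda>x. x \<noteq> 0) q)"
    and meet: "slots_meet_deadlines al be f q"
    and nonneg: "\<forall>x\<in>set q - {0}. al x \<ge> 0" and "f > 0"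
  shows "edf_feasible al be f (set q - {0})"
  unfolding edf_feasible_def
proof
  fix x assume x: "x \<in> set q - {0}"
  define I where "I = {i. i < length q \<and> q ! i \<noteq> 0 \<and> be (q ! i) \<le> be x}"
  define l where "l = Max I"
  have "finite I"
    unfolding I_def by auto
  moreover have "I \<noteq> {}"
    using x by (auto simp: I_def in_set_conv_nth)
  ultimately have "l \<in> I"
    unfolding l_def by (rule Max_in)
  have earlier: "{k\<in>set q - {0}. be k \<le> be x} \<subseteq> set (take (Suc l) q) - {0}"
  proof
    fix k assume k: "k \<in> {k\<in>set q - {0}. be k \<le> be x}"
    then obtain i where i: "i < length q" "q ! i = k"
      by (auto simp: in_set_conv_nth)
    with k have "i \<le> l"
      unfolding l_def using \<open>finite I\<close> by (auto simp: I_def)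
    with i k show "k \<in> set (take (Suc l) q) - {0}"
      by (auto simp: in_set_conv_nth intro!: exI[of _ i])
  qed
  have "demand al be (set q - {0}) (be x) \<le> sum al (set (take (Suc l) q) - {0})"
    unfolding demand_def
    by (rule sum_mono2) (use earlier nonneg in \<open>auto dest: in_set_takeD\<close>)
  also have "\<dots> = sum_list (map (slot_alpha al) (take (Suc l) q))"
    using sum_list_slot_alpha_take[OF dist] by simp
  also have "\<dots> \<le> f * be (q ! l)"
    using meet \<open>l \<in> I\<close> \<open>f > 0\<close>
    by (auto simp: slots_meet_deadlines_def I_def pos_divide_le_eq mult.commute)
  also have "\<dots> \<le> f * be x"
    using \<open>l \<in> I\<close> \<open>f > 0\<close> by (auto simp: I_def)
  finally show "demand al be (set q - {0}) (be x) \<le> f * be x" .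
qed

lemma edf_feasible_imp_slots_meet_deadlines:
  assumes dist: "distinct (filter (\<lambda>x. x \<noteq> 0) q)"
    and sorted: "sorted_wrt (\<lambda>x y. x \<noteq> 0 \<longrightarrow> y \<noteq> 0 \<longrightarrow> be x \<le> be y) q"
    and feasible: "edf_feasible al be f (set q - {0})"
    and nonneg: "\<forall>x\<in>set q - {0}. al x \<ge> 0" and "f > 0"
  shows "slots_meet_deadlines al be f q"
  unfolding slots_meet_deadlines_def
proof (intro allI impI)
  fix j assume j: "j < length q" "q ! j \<noteq> 0"
  have earlier: "set (take (Suc j) q) - {0} \<subseteq> {k\<in>set q - {0}. be k \<le> be (q ! j)}"
  proof
    fix k assume "k \<in> set (take (Suc j) q) - {0}"
    then obtain i where i: "i \<le> j" "q ! i = k" "k \<noteq> 0"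
      using j by (auto simp: in_set_conv_nth less_Suc_eq_le)
    then have "be k \<le> be (q ! j)"
      using sorted j by (cases "i = j") (auto simp: sorted_wrt_iff_nth_less)
    with i j show "k \<in> {k\<in>set q - {0}. be k \<le> be (q ! j)}"
      by auto
  qed
  have "sum al (set (take (Suc j) q) - {0}) \<le> demand al be (set q - {0}) (be (q ! j))"
    unfolding demand_def by (rule sum_mono2) (use earlier nonneg in auto)
  also have "\<dots> \<le> f * be (q ! j)"
    using feasible j unfolding edf_feasible_def by auto
  finally show "sum_list (map (slot_alpha al) (take (Suc j) q)) / f \<le> be (q ! j)"
    using sum_list_slot_alpha_take[OF dist] \<open>f > 0\<close> by (simp add: pos_divide_le_eq mult.commute)
qed

lemma slots_meet_deadlines_list_update:
  assumes "slots_meet_deadlines al be f q"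
  shows "slots_meet_deadlines al be f (q[i := x]) \<longleftrightarrow>
    (\<forall>j. i \<le> j \<and> j < length (q[i := x]) \<and> q[i := x] ! j \<noteq> 0 \<longrightarrow>
       sum_list (map (slot_alpha al) (take (Suc j) (q[i := x]))) / f \<le> be (q[i := x] ! j))"
    (is "_ \<longleftrightarrow> ?late")
proof
  show "?late" if "slots_meet_deadlines al be f (q[i := x])"
    using that unfolding slots_meet_deadlines_def by auto
next
  assume ?late
  show "slots_meet_deadlines al be f (q[i := x])"
    unfolding slots_meet_deadlines_def
  proof (intro allI impI)
    fix j assume j: "j < length (q[i := x])" "q[i := x] ! j \<noteq> 0"
    show "sum_list (map (slot_alpha al) (take (Suc j) (q[i := x]))) / f \<le> be (q[i := x] ! j)"
    proof (cases "j < i")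
      case True
      then have "take (Suc j) (q[i := x]) = take (Suc j) q" "q[i := x] ! j = q ! j"
        by auto
      with assms j show ?thesis
        by (simp add: slots_meet_deadlines_def)
    next
      case False
      with \<open>?late\<close> j show ?thesis
        by simp
    qed
  qed
qed

lemma no_outage_iff_slots_meet_deadlines:
  assumes "0 \<notin> set t"
  shows "no_outage al be f t \<longleftrightarrow> slots_meet_deadlines al be f t"
proof -
  have slot_alpha_eq: "map (slot_alpha al) (take j t) = map al (take j t)" for j
    using assms by (intro map_cong refl) (auto simp: slot_alpha_def dest: in_set_takeD)
  have "t ! j \<noteq> 0" if "j < length t" for j
    using assms that nth_mem by metis
  then show ?thesis
    unfolding no_outage_def slots_meet_deadlines_def completion_time_def slot_alpha_eq by auto
qed

lemma edf_feasible_if_no_outage: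
  assumes "distinct t" "0 \<notin> set t" "\<forall>x\<in>set t. al x \<ge> 0" "f > 0" "no_outage al be f t"
  shows "edf_feasible al be f (set t)"
  using slots_meet_deadlines_imp_edf_feasible[of t al be f] assms
  by (simp add: no_outage_iff_slots_meet_deadlines)

lemma edf_schedule_of_feasible:
  assumes b: "distinct b" "0 \<notin> set b" "sorted_wrt (\<lambda>x y. be x \<le> be y) b" "set b = {1..N}"
    and nonneg: "\<forall>x\<in>set b. al x \<ge> 0" and "f > 0"
    and U: "U \<subseteq> set b" "edf_feasible al be f U"
  shows "ordered_set N (filter (\<lambda>x. x \<in> U) b) \<and> no_outage al be f (filter (\<lambda>x. x \<in> U) b) \<and>
         length (filter (\<lambda>x. x \<in> U) b) = card U"
proof -
  let ?t = "filter (\<lambda>x. x \<in> U) b"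
  have t: "distinct ?t" "set ?t = U" "0 \<notin> set ?t"
    using b U by auto
  have "slots_meet_deadlines al be f ?t"
  proof (rule edf_feasible_imp_slots_meet_deadlines)
    show "sorted_wrt (\<lambda>x y. x \<noteq> 0 \<longrightarrow> y \<noteq> 0 \<longrightarrow> be x \<le> be y) ?t"
      using b(3) by (auto simp: sorted_wrt_filter intro: sorted_wrt_mono_rel)
  qed (use b(1) t U nonneg \<open>f > 0\<close> in auto)
  with t have "no_outage al be f ?t"
    by (simp add: no_outage_iff_slots_meet_deadlines)
  moreover have "length ?t = card U"
    using distinct_card[OF t(1)] t(2) by simp
  ultimately show ?thesis
    using t U b(4) by (auto simp: ordered_set_def)
qed

text \<open>The vector q of the algorithm when it holds exactly the tasks of S.\<close>
definition slots :: "nat list \<Rightarrow> nat set \<Rightarrow> nat list" where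
  "slots b S = map (\<lambda>x. if x \<in> S then x else 0) b"

lemma filter_nonzero_slots:
  "0 \<notin> set b \<Longrightarrow> filter (\<lambda>x. x \<noteq> 0) (slots b S) = filter (\<lambda>x. x \<in> S) b"
  unfolding slots_def by (induction b) auto

lemma slots_meet_deadlines_slots_iff:
  assumes "distinct b" "0 \<notin> set b" "sorted_wrt (\<lambda>x y. be x \<le> be y) b"
    and "\<forall>x\<in>set b. al x \<ge> 0" "f > 0" "S \<subseteq> set b"
  shows "slots_meet_deadlines al be f (slots b S) \<longleftrightarrow> edf_feasible al be f S"
proof -
  have dist: "distinct (filter (\<lambda>x. x \<noteq> 0) (slots b S))"
    unfolding filter_nonzero_slots[OF assms(2)] using assms(1) by simp
  have set_eq: "set (slots b S) - {0} = S"
    using assms(2,6) by (auto simp: slots_def)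
  have "sorted_wrt (\<lambda>x y. x \<noteq> 0 \<longrightarrow> y \<noteq> 0 \<longrightarrow> be x \<le> be y) (slots b S)"
    unfolding slots_def sorted_wrt_map by (rule sorted_wrt_mono_rel[OF _ assms(3)]) auto
  moreover have "\<forall>x\<in>set (slots b S) - {0}. al x \<ge> 0"
    using assms(4,6) set_eq by auto
  ultimately show ?thesis
    using slots_meet_deadlines_imp_edf_feasible[OF dist]
      edf_feasible_imp_slots_meet_deadlines[OF dist] \<open>f > 0\<close>
    unfolding set_eq by blast
qed

lemma ojs_step_slots:
  assumes b: "distinct b" "0 \<notin> set b" "sorted_wrt (\<lambda>x y. be x \<le> be y) b"
    and nonneg: "\<forall>x\<in>set b. al x \<ge> 0" and "f > 0"
    and S: "S \<subseteq> set b" "edf_feasible al be f S" and c: "c \<in> set b" "c \<notin> S"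
  shows "ojs_step al be f b (slots b S) c =
         slots b (if edf_feasible al be f (insert c S) then insert c S else S)"
proof -
  obtain i where i: "i < length b" "b ! i = c"
    using c by (auto simp: in_set_conv_nth)
  have istar: "(THE i. i < length b \<and> b ! i = c) = i"
    using i b(1) by (auto simp: nth_eq_iff_index_eq)
  have added: "(slots b S)[i := b ! i] = slots b (insert c S)"
    using i by (intro nth_equalityI) (auto simp: slots_def nth_list_update nth_eq_iff_index_eq[OF b(1)])
  have removed: "(slots b (insert c S))[i := 0] = slots b S"
    using i c
    by (intro nth_equalityI) (auto simp: slots_def nth_list_update nth_eq_iff_index_eq[OF b(1)])
  have "slots_meet_deadlines al be f (slots b S)"
    using slots_meet_deadlines_slots_iff[OF b nonneg \<open>f > 0\<close>] S by blast
  \<comment> \<open>the algorithm tests only the slots from i on; the earlier ones are unchanged\<close>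
  from slots_meet_deadlines_list_update[OF this, of i "b ! i"]
  have "(\<exists>j. i \<le> j \<and> j < length (slots b (insert c S)) \<and> slots b (insert c S) ! j \<noteq> 0 \<and>
          sum_list (map (slot_alpha al) (take (Suc j) (slots b (insert c S)))) / f
            > be (slots b (insert c S) ! j)) \<longleftrightarrow>
        \<not> edf_feasible al be f (insert c S)"
    unfolding added using slots_meet_deadlines_slots_iff[OF b nonneg \<open>f > 0\<close>] S c
    by (auto simp: not_le)
  then show ?thesis
    unfolding ojs_step_def Let_def istar added removed by simp
qed

lemma edf_feasible_exchange_superset:
  assumes card_bound: "\<forall>U\<subseteq>set b. edf_feasible al be f U \<longrightarrow> card U \<le> M"
    and nonneg: "\<forall>x\<in>set b. al x \<ge> 0" and "f \<ge> 0"
    and T: "T \<subseteq> set b" "edf_feasible al be f T" "card T = M"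
    and c: "c \<in> set b" "c \<notin> T" "c \<notin> R" "\<forall>e\<in>R. al c \<le> al e"
    and feasible: "edf_feasible al be f (insert c (T - R))"
  shows "\<exists>T'. T' \<subseteq> set b \<and> edf_feasible al be f T' \<and> card T' = M \<and> T' - R = insert c (T - R)"
proof -
  have "finite T"
    using T(1) finite_subset by blast
  \<comment> \<open>otherwise insert c T would be a feasible set of size M + 1\<close>
  have "T \<inter> R \<noteq> {}"
  proof
    assume "T \<inter> R = {}"
    then have "insert c T \<subseteq> set b" "edf_feasible al be f (insert c T)"
      using feasible T(1) c(1) by (auto simp: Diff_triv)
    with card_bound have "card (insert c T) \<le> M"
      by blast
    with c(2) T(3) \<open>finite T\<close> show False
      by simp
  qed
  then obtain e where e: "e \<in> T \<inter> R" "\<forall>k\<in>T \<inter> R. be e \<le> be k"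
    using ex_is_arg_min_if_finite[of "T \<inter> R" be] \<open>finite T\<close>
    by (auto simp: is_arg_min_def not_less)
  define T' where "T' = insert c (T - {e})"
  have "edf_feasible al be f T'"
    unfolding T'_def
  proof (rule edf_feasible_exchange[OF T(2) \<open>finite T\<close> _ feasible _ _ c(2)])
    show "T - R \<subseteq> T" "e \<in> T" "\<forall>k\<in>T - (T - R). be e \<le> be k" "0 \<le> al c" "al c \<le> al e"
      using e c nonneg by auto
  qed fact
  moreover have "card T' = M"
    using e c(2) T(3) \<open>finite T\<close>
    by (simp add: T'_def card_insert_if card_Suc_Diff1 del: card_Diff_insert)
  moreover have "T' \<subseteq> set b" "T' - R = insert c (T - R)"
    using e T(1) c(1,3) by (auto simp: T'_def)
  ultimately show ?thesis
    by auto
qed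

lemma edf_feasible_optimal_superset_step:
  assumes card_bound: "\<forall>U\<subseteq>set b. edf_feasible al be f U \<longrightarrow> card U \<le> M"
    and nonneg: "\<forall>x\<in>set b. al x \<ge> 0" and "f \<ge> 0"
    and T: "T \<subseteq> set b" "edf_feasible al be f T" "card T = M"
    and c: "c \<in> set b" "c \<notin> R" "\<forall>e\<in>R. al c \<le> al e"
  defines "S \<equiv> T - insert c R"
  shows "\<exists>T'. T' \<subseteq> set b \<and> edf_feasible al be f T' \<and> card T' = M \<and>
           T' - R = (if edf_feasible al be f (insert c S) then insert c S else S)"
proof (cases "c \<in> T")
  case True
  then have "insert c S \<subseteq> T" "T - R = insert c S"
    using c(2) by (auto simp: S_def)
  moreover have "finite T"
    using T(1) finite_subset by blast
  ultimately have "edf_feasible al be f (insert c S)"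
    using edf_feasible_subset[OF T(2)] T(1) nonneg by blast
  with \<open>T - R = insert c S\<close> show ?thesis
    using T by auto
next
  case False
  then have "S = T - R"
    by (auto simp: S_def)
  with False show ?thesis
    using edf_feasible_exchange_superset[OF card_bound nonneg \<open>f \<ge> 0\<close> T c(1) False c(2,3)] T by auto
qed

lemma foldl_ojs_step_slots:
  assumes b: "distinct b" "0 \<notin> set b" "sorted_wrt (\<lambda>x y. be x \<le> be y) b"
    and nonneg: "\<forall>x\<in>set b. al x \<ge> 0" and "f > 0"
    and card_bound: "\<forall>U\<subseteq>set b. edf_feasible al be f U \<longrightarrow> card U \<le> M"
    and cs: "distinct cs" "set cs \<subseteq> set b" "sorted_wrt (\<lambda>x y. al x \<le> al y) cs"
    and T: "T \<subseteq> set b" "edf_feasible al be f T" "card T = M"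
  shows "\<exists>T'. foldl (ojs_step al be f b) (slots b (T - set cs)) cs = slots b T' \<and>
           T' \<subseteq> set b \<and> edf_feasible al be f T' \<and> card T' = M"
  using cs T
proof (induction cs arbitrary: T)
  case Nil
  then show ?case
    by auto
next
  case (Cons c cs)
  let ?S = "T - insert c (set cs)"
  let ?S' = "if edf_feasible al be f (insert c ?S) then insert c ?S else ?S"
  have "finite T"
    using Cons.prems(4) finite_subset by blast
  then have "edf_feasible al be f ?S"
    using edf_feasible_subset[OF Cons.prems(5)] Cons.prems(4) nonneg by blast
  have step: "ojs_step al be f b (slots b ?S) c = slots b ?S'"
    by (rule ojs_step_slots[OF b nonneg \<open>f > 0\<close> _ \<open>edf_feasible al be f ?S\<close>])
      (use Cons.prems(2,4) in auto)
  obtain T' where T': "T' \<subseteq> set b" "edf_feasible al be f T'" "card T' = M" "T' - set cs = ?S'"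
    using edf_feasible_optimal_superset_step[OF card_bound nonneg _ Cons.prems(4-6), of c "set cs"]
      Cons.prems(1-3) \<open>f > 0\<close> by auto
  from Cons.IH[OF _ _ _ T'(1-3)] Cons.prems(1-3) show ?case
    by (simp add: step T'(4))
qed

theorem lemma4:
  fixes N :: nat and f :: real and alpha beta :: "nat \<Rightarrow> real"
    and c b s :: "nat list"
  assumes f_pos: "f > 0"
    and alpha_pos: "\<forall>a\<in>{1..N}. alpha a > 0"
    and c_perm: "distinct c" "set c = {1..N}"
    and c_sorted: "sorted_wrt (c_order alpha beta) c"
    and b_perm: "distinct b" "set b = {1..N}"
    and b_sorted: "sorted_wrt (b_order alpha beta) b"
    and s_opt: "optimal_ordered_set N alpha beta f s"
  shows "optimal_ordered_set N alpha beta f (ojs alpha beta f c b)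
         \<and> length (ojs alpha beta f c b) = length s"
proof -
  have b0: "0 \<notin> set b"
    using b_perm(2) by auto
  have b_by_beta: "sorted_wrt (\<lambda>x y. beta x \<le> beta y) b"
    by (rule sorted_wrt_mono_rel[OF _ b_sorted]) (auto simp: b_order_def)
  have c_by_alpha: "sorted_wrt (\<lambda>x y. alpha x \<le> alpha y) c"
    by (rule sorted_wrt_mono_rel[OF _ c_sorted]) (auto simp: c_order_def)
  have nonneg: "\<forall>x\<in>set b. alpha x \<ge> 0"
    using alpha_pos b_perm(2) by (simp add: less_imp_le)
  note schedule = edf_schedule_of_feasible[OF b_perm(1) b0 b_by_beta b_perm(2) nonneg f_pos]
  have s: "ordered_set N s" "no_outage alpha beta f s"
    and s_max: "\<And>t. ordered_set N t \<Longrightarrow> no_outage alpha beta f t \<Longrightarrow> length t \<le> length s"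
    using s_opt unfolding optimal_ordered_set_def by auto
  have card_bound: "\<forall>U\<subseteq>set b. edf_feasible alpha beta f U \<longrightarrow> card U \<le> length s"
    using schedule s_max by metis
  have "set s \<subseteq> set b" "distinct s"
    using s(1) b_perm(2) by (auto simp: ordered_set_def)
  moreover from this have "edf_feasible alpha beta f (set s)"
    using edf_feasible_if_no_outage[OF _ _ _ f_pos s(2)] b0 nonneg by blast
  ultimately obtain T where T: "foldl (ojs_step alpha beta f b) (slots b {}) c = slots b T"
      "T \<subseteq> set b" "edf_feasible alpha beta f T" "card T = length s"
    using foldl_ojs_step_slots[OF b_perm(1) b0 b_by_beta nonneg f_pos card_bound c_perm(1) _
        c_by_alpha] b_perm(2) c_perm(2) by (metis Diff_eq_empty_iff distinct_card order_refl)
  have "ojs alpha beta f c b = filter (\<lambda>x. x \<in> T) b"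
    using T(1) filter_nonzero_slots[OF b0] by (simp add: ojs_def slots_def map_replicate_const)
  then show ?thesis
    using schedule[OF T(2,3)] T(4) s_max by (auto simp: optimal_ordered_set_def)
qed

end
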